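(* Consider the delayed online learning protocol of the context. Assume the maximum delay is bounded by $\tau$ (i.e. $\{1,\dots,t-\tau-1\}\subset\mathcal S_t$ for all $t$), that $\|g_t\|_*\le G$ for all $t$, and that whenever $s\in\mathcal S_t$ one has $|\mathcal S_s|<|\mathcal S_t|$. Let DDA be run with \[\eta_t=\frac{r}{G\sqrt{(1+2\tau)(|\mathcal S_t|+\tau+1)}}.\] Then for every $p\in\mathcal X$ with $h(p)\le r^2$, \[R_T(p)\le 2rG\sqrt{(T+\tau)(1+2\tau)}.\]
   Context: Let $\mathcal V$ be a finite-dimensional real vector space with norm $\|\cdot\|$ and dual norm $\|\cdot\|_*$, and $\mathcal X\subset\mathcal V$ closed convex. A regularizer $h:\mathcal V\to\mathbb R\cup\{+\infty\}$ is lower semicontinuous, $1$-strongly convex w.r.t. $\|\cdot\|$ on $\mathcal X$, with $\mathcal X\subset\operatorname{dom}h$, whose subdifferential admits a continuous selection, and $h\ge0$. Protocol: at each round $t=1,\dots,T$ one agent $i(t)$ (among possibly many) is active, plays $x_t\in\mathcal X$, incurs $f_t(x_t)$ ($f_t$ convex, $\mathcal X\subset\operatorname{dom}\partial f_t$); a subgradient $g_t\in\partial f_t(x_t)$ is revealed later. $\mathcal S^i_t\subset\{1,\dots,t-1\}$: timestamps of subgradients available to (used by) agent $i$ at time $t$, nondecreasing in $t$; $\mathcal S_t=\mathcal S^{i(t)}_t$. DDA: $x_t=\arg\min_{x\in\mathcal X}\{\sum_{s\in\mathcal S_t}\langle g_s,x\rangle+h(x)/\eta_t\}$. Regret: $R_T(p)=\sum_tf_t(x_t)-\sum_tf_t(p)$.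 *)

theory Defs
  imports "HOL-Analysis.Analysis"
begin

text \<open>A norm on a finite-dimensional real vector space (modelled as a euclidean_space type;
  the dual space is identified with the space itself via the inner product).\<close>
definition is_norm :: "('a::euclidean_space \<Rightarrow> real) \<Rightarrow> bool" where
  "is_norm nrm \<longleftrightarrow> (\<forall>x. nrm x = 0 \<longleftrightarrow> x = 0)
     \<and> (\<forall>x y. nrm (x + y) \<le> nrm x + nrm y)
     \<and> (\<forall>c x. nrm (c *\<^sub>R x) = \<bar>c\<bar> * nrm x)"

definition dual_norm :: "('a::euclidean_space \<Rightarrow> real) \<Rightarrow> 'a \<Rightarrow> real" where
  "dual_norm nrm g = Sup {g \<bullet> x | x. nrm x \<le> 1}"

definition subdiff :: "('a::euclidean_space \<Rightarrow> ereal) \<Rightarrow> 'a \<Rightarrow> 'a set" where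
  "subdiff f x = {g. \<bar>f x\<bar> \<noteq> \<infinity> \<and> (\<forall>y. f y \<ge> f x + ereal (g \<bullet> (y - x)))}"

definition dom_subdiff :: "('a::euclidean_space \<Rightarrow> ereal) \<Rightarrow> 'a set" where
  "dom_subdiff f = {x. subdiff f x \<noteq> {}}"

definition lower_semicont :: "('a::euclidean_space \<Rightarrow> ereal) \<Rightarrow> bool" where
  "lower_semicont f \<longleftrightarrow> (\<forall>x. f x \<le> Liminf (at x) f)"

definition ereal_convex :: "('a::euclidean_space \<Rightarrow> ereal) \<Rightarrow> bool" where
  "ereal_convex f \<longleftrightarrow> (\<forall>x y u. 0 \<le> u \<and> u \<le> 1 \<longrightarrow>
      f (u *\<^sub>R x + (1 - u) *\<^sub>R y) \<le> ereal u * f x + ereal (1 - u) * f y)"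

definition strongly_convex_on :: "'a set \<Rightarrow> ('a::euclidean_space \<Rightarrow> real) \<Rightarrow> ('a \<Rightarrow> ereal) \<Rightarrow> bool" where
  "strongly_convex_on X nrm h \<longleftrightarrow> (\<forall>x\<in>X. \<forall>y\<in>X. \<forall>u. 0 \<le> u \<and> u \<le> 1 \<longrightarrow>
      h (u *\<^sub>R x + (1 - u) *\<^sub>R y) \<le> ereal u * h x + ereal (1 - u) * h y
        - ereal (u * (1 - u) / 2 * (nrm (x - y))\<^sup>2))"

end

theory Submission
  imports Defs
begin

text \<open>Order the rounds by the number \<open>card (S t)\<close> of gradients available when they are played.
  Processing them in this order, induction gives the be-the-leader bound
  \<open>\<Sum>t\<in>Q. (g t \<bullet> x t - \<eta> t * G\<^sup>2 * (1 + 2 * \<tau>) / 2) \<le> (\<Sum>t\<in>Q. g t) \<bullet> y + h y / e\<close>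
  for all \<open>y \<in> X\<close> and all \<open>e \<le> \<eta> t\<close>. When round \<open>t\<close> is added, every gradient it saw has
  been processed and at most \<open>\<tau>\<close> others have, so by strong convexity the DDA point \<open>x t\<close> lies
  within \<open>\<eta> t * \<tau> * G\<close> of the leader of the processed gradients, which costs at most
  \<open>\<eta> t * G\<^sup>2 * (1/2 + \<tau>)\<close>. Linearising \<open>f t\<close> by \<open>g t\<close>, taking \<open>y = p\<close> and \<open>e\<close> the smallest
  step size, and using \<open>\<Sum>t=1..T. 1 / (2 * sqrt t) \<le> sqrt T\<close> yields the regret bound.\<close>

section \<open>Norms on a Euclidean space\<close>

lemma is_norm_zero: "is_norm nrm \<Longrightarrow> nrm 0 = 0"
  unfolding is_norm_def by auto

lemma is_norm_minus: "is_norm nrm \<Longrightarrow> nrm (- x) = nrm x"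
  unfolding is_norm_def by (metis abs_minus_cancel abs_one mult_1 scaleR_minus1_left)

lemma is_norm_minus_commute: "is_norm nrm \<Longrightarrow> nrm (x - y) = nrm (y - x)"
  using is_norm_minus[of nrm "x - y"] by simp

lemma is_norm_nonneg:
  assumes "is_norm nrm" shows "0 \<le> nrm x"
proof -
  have "nrm (x + - x) \<le> nrm x + nrm (- x)" using assms unfolding is_norm_def by blast
  then show ?thesis using is_norm_zero[OF assms] is_norm_minus[OF assms] by simp
qed

lemma is_norm_pos: "is_norm nrm \<Longrightarrow> x \<noteq> 0 \<Longrightarrow> 0 < nrm x"
  using is_norm_nonneg[of nrm x] unfolding is_norm_def by (metis order_le_less)

lemma is_norm_sum_le:
  assumes "is_norm nrm"
  shows "nrm (sum f A) \<le> (\<Sum>a\<in>A. nrm (f a))"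
proof (induction A rule: infinite_finite_induct)
  case (insert a A)
  have "nrm (f a + sum f A) \<le> nrm (f a) + nrm (sum f A)"
    using assms unfolding is_norm_def by blast
  then show ?case using insert by simp
qed (use is_norm_zero[OF assms] in simp_all)

lemma is_norm_le_norm:
  assumes "is_norm nrm"
  obtains C where "0 \<le> C" "\<And>x. nrm x \<le> C * norm x"
proof
  show "0 \<le> (\<Sum>b\<in>Basis. nrm b)" by (simp add: sum_nonneg is_norm_nonneg[OF assms])
  fix x :: 'a
  have "nrm x = nrm (\<Sum>b\<in>Basis. (x \<bullet> b) *\<^sub>R b)" by (simp add: euclidean_representation)
  also have "\<dots> \<le> (\<Sum>b\<in>Basis. nrm ((x \<bullet> b) *\<^sub>R b))" by (rule is_norm_sum_le[OF assms])
  also have "\<dots> = (\<Sum>b\<in>Basis. \<bar>x \<bullet> b\<bar> * nrm b)"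
    using assms unfolding is_norm_def by simp
  also have "\<dots> \<le> (\<Sum>b\<in>Basis. norm x * nrm b)"
    by (intro sum_mono mult_right_mono) (simp_all add: Basis_le_norm is_norm_nonneg[OF assms])
  finally show "nrm x \<le> (\<Sum>b\<in>Basis. nrm b) * norm x" by (simp add: sum_distrib_left mult.commute)
qed

text \<open>\<open>nrm\<close> is Lipschitz, hence attains a positive minimum on the compact Euclidean unit sphere.\<close>
lemma is_norm_ge_norm:
  fixes nrm :: "'a::euclidean_space \<Rightarrow> real"
  assumes "is_norm nrm"
  obtains k where "0 < k" "\<And>x. k * norm x \<le> nrm x"
proof -
  obtain C where C: "0 \<le> C" "\<And>x. nrm x \<le> C * norm x" using is_norm_le_norm[OF assms] by blast
  have "\<bar>nrm x - nrm y\<bar> \<le> C * dist x y" for x y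
    using assms C(2)[of "x - y"] C(2)[of "y - x"] unfolding is_norm_def
    by (smt (verit) diff_add_cancel dist_commute dist_norm)
  then have "continuous_on (sphere 0 1) nrm"
    using C(1) by (intro lipschitz_on_continuous_on[of C]) (auto intro!: lipschitz_onI simp: dist_real_def)
  moreover have "sphere (0::'a) 1 \<noteq> {}" by simp
  ultimately obtain x0 where x0: "norm x0 = 1" "\<And>y. norm y = 1 \<Longrightarrow> nrm x0 \<le> nrm y"
    using continuous_attains_inf[OF compact_sphere] by (metis mem_sphere_0)
  have "nrm x0 * norm x \<le> nrm x" for x
  proof (cases "x = 0")
    case False
    have "nrm x0 \<le> nrm ((1 / norm x) *\<^sub>R x)" using x0(2) False by simp
    also have "\<dots> = nrm x / norm x" using assms unfolding is_norm_def by simp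
    finally show ?thesis using False by (simp add: field_simps)
  qed (simp add: is_norm_zero[OF assms])
  moreover have "0 < nrm x0" using is_norm_pos[OF assms, of x0] x0(1) by fastforce
  ultimately show thesis using that by blast
qed

lemma inner_le_dual_norm:
  fixes nrm :: "'a::euclidean_space \<Rightarrow> real"
  assumes "is_norm nrm"
  shows "g \<bullet> y \<le> dual_norm nrm g * nrm y"
proof (cases "y = 0")
  case False
  obtain k where k: "0 < k" "\<And>x. k * norm x \<le> nrm x" using is_norm_ge_norm[OF assms] by blast
  have "g \<bullet> x \<le> norm g / k" if "nrm x \<le> 1" for x
  proof -
    have "g \<bullet> x \<le> norm g * norm x" by (simp add: norm_cauchy_schwarz)
    also have "\<dots> \<le> norm g * (1 / k)"
      using k that by (intro mult_left_mono) (auto simp: field_simps intro: order_trans)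
    finally show ?thesis by simp
  qed
  then have bdd: "bdd_above {g \<bullet> x | x. nrm x \<le> 1}" by (auto intro!: bdd_aboveI[of _ "norm g / k"])
  have ny: "0 < nrm y" using is_norm_pos[OF assms False] .
  have "nrm ((1 / nrm y) *\<^sub>R y) = 1" using assms ny False unfolding is_norm_def by simp
  then have "g \<bullet> ((1 / nrm y) *\<^sub>R y) \<le> dual_norm nrm g"
    unfolding dual_norm_def by (intro cSup_upper[OF _ bdd]) (auto intro!: exI[of _ "(1 / nrm y) *\<^sub>R y"])
  then show ?thesis using ny by (simp add: field_simps)
qed (simp add: is_norm_zero[OF assms])

lemma inner_le_of_dual_norm_le:
  fixes nrm :: "'a::euclidean_space \<Rightarrow> real"
  assumes "is_norm nrm" "dual_norm nrm g \<le> G"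
  shows "g \<bullet> v \<le> G * nrm v"
  using inner_le_dual_norm[OF assms(1)] mult_right_mono[OF assms(2) is_norm_nonneg[OF assms(1)]]
  by (rule order_trans)

lemma inner_sum_le_card_mult:
  fixes B :: real
  assumes "\<And>s. s \<in> D \<Longrightarrow> g s \<bullet> v \<le> B"
  shows "(\<Sum>s\<in>D. g s) \<bullet> v \<le> card D * B"
  unfolding inner_sum_left using sum_mono[of D "\<lambda>s. g s \<bullet> v" "\<lambda>_. B"] assms by simp

section \<open>Strongly convex regularizers\<close>

lemma peter_paul_inequality:
  fixes a b e :: real
  assumes "0 < e"
  shows "a * b \<le> b\<^sup>2 / (2 * e) + e * a\<^sup>2 / 2"
proof -
  have "0 \<le> (b - e * a)\<^sup>2 / (2 * e)" using assms by simp
  also have "\<dots> = b\<^sup>2 / (2 * e) + e * a\<^sup>2 / 2 - a * b"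
    using assms by (simp add: field_simps power2_eq_square)
  finally show ?thesis by simp
qed

locale strongly_convex_regularizer =
  fixes nrm :: "'a::euclidean_space \<Rightarrow> real" and X :: "'a set" and reg :: "'a \<Rightarrow> real"
  assumes norm: "is_norm nrm" and convex: "convex X"
    and strongly_convex: "\<And>x y u. x \<in> X \<Longrightarrow> y \<in> X \<Longrightarrow> 0 \<le> u \<Longrightarrow> u \<le> 1 \<Longrightarrow>
      reg (u *\<^sub>R x + (1 - u) *\<^sub>R y) \<le> u * reg x + (1 - u) * reg y - u * (1 - u) / 2 * (nrm (x - y))\<^sup>2"
begin

text \<open>The DDA objective for accumulated gradient \<open>c\<close> and step size \<open>e\<close>.\<close>
definition objective :: "'a \<Rightarrow> real \<Rightarrow> 'a \<Rightarrow> real" where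
  "objective c e y = c \<bullet> y + reg y / e"

definition minimizer :: "'a \<Rightarrow> real \<Rightarrow> 'a \<Rightarrow> bool" where
  "minimizer c e z \<longleftrightarrow> z \<in> X \<and> (\<forall>y\<in>X. objective c e z \<le> objective c e y)"

lemma objective_strongly_convex:
  assumes "x \<in> X" "y \<in> X" "0 \<le> u" "u \<le> 1" "0 < e"
  shows "objective c e (u *\<^sub>R x + (1 - u) *\<^sub>R y)
    \<le> u * objective c e x + (1 - u) * objective c e y - u * (1 - u) / (2 * e) * (nrm (x - y))\<^sup>2"
proof -
  have "reg (u *\<^sub>R x + (1 - u) *\<^sub>R y) / e
      \<le> (u * reg x + (1 - u) * reg y - u * (1 - u) / 2 * (nrm (x - y))\<^sup>2) / e"
    using strongly_convex[OF assms(1-4)] assms(5) by (intro divide_right_mono) auto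
  also have "\<dots> = u * (reg x / e) + (1 - u) * (reg y / e) - u * (1 - u) / (2 * e) * (nrm (x - y))\<^sup>2"
    by (simp add: diff_divide_distrib add_divide_distrib)
  finally show ?thesis
    unfolding objective_def by (simp add: inner_add_right distrib_left)
qed

lemma objective_midpoint:
  assumes "a \<in> X" "b \<in> X" "0 < e"
  shows "objective c e ((1/2) *\<^sub>R a + (1/2) *\<^sub>R b)
    \<le> objective c e a / 2 + objective c e b / 2 - (nrm (a - b))\<^sup>2 / (8 * e)"
  using objective_strongly_convex[OF assms(1,2), of "1/2" e c] assms(3) by simp

lemma minimizer_quadratic_growth:
  assumes "0 < e" "minimizer c e z" "y \<in> X"
  shows "objective c e z + (nrm (y - z))\<^sup>2 / (2 * e) \<le> objective c e y"
proof -
  define Q where "Q = (nrm (y - z))\<^sup>2 / (2 * e)"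
  have "(1 - u) * Q \<le> objective c e y - objective c e z" if "0 < u" "u < 1" for u
  proof -
    have "u *\<^sub>R y + (1 - u) *\<^sub>R z \<in> X"
      using assms that convexD[OF convex] unfolding minimizer_def by simp
    then have "objective c e z \<le> objective c e (u *\<^sub>R y + (1 - u) *\<^sub>R z)"
      using assms(2) unfolding minimizer_def by blast
    also have "\<dots> \<le> u * objective c e y + (1 - u) * objective c e z - u * ((1 - u) * Q)"
      using objective_strongly_convex[of y z u e c] assms that
      unfolding minimizer_def Q_def by (simp add: field_simps)
    finally have "u * ((1 - u) * Q) \<le> u * (objective c e y - objective c e z)"
      by (simp add: algebra_simps)
    then show ?thesis using that by simp
  qed
  then have "\<forall>\<^sub>F u in at_right 0. (1 - u) * Q \<le> objective c e y - objective c e z"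
    using eventually_at_right_real[of 0 1] by (auto elim: eventually_mono)
  moreover have "((\<lambda>u. (1 - u) * Q) \<longlongrightarrow> (1 - 0) * Q) (at_right 0)"
    by (intro tendsto_intros)
  ultimately have "(1 - 0) * Q \<le> objective c e y - objective c e z"
    by (intro tendsto_upperbound[OF _ _ trivial_limit_at_right_real])
  then show ?thesis unfolding Q_def by simp
qed

text \<open>Comparing the quadratic growth of the two objectives at each other's minimizer gives
  \<open>nrm (x - z)\<^sup>2 / e \<le> b \<bullet> (x - z) \<le> M * nrm (x - z)\<close>.\<close>
lemma minimizer_stability:
  assumes "0 < e" "0 \<le> M" and b: "\<And>v. b \<bullet> v \<le> M * nrm v"
    and x: "minimizer a e x" and z: "minimizer (a + b) e z"
  shows "nrm (x - z) \<le> e * M"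
proof -
  define d where "d = nrm (x - z)"
  have "objective a e x + d\<^sup>2 / (2 * e) \<le> objective a e z"
    using minimizer_quadratic_growth[OF assms(1) x, of z] z
    unfolding minimizer_def d_def by (simp add: is_norm_minus_commute[OF norm])
  moreover have "objective (a + b) e z + d\<^sup>2 / (2 * e) \<le> objective (a + b) e x"
    using minimizer_quadratic_growth[OF assms(1) z, of x] x unfolding minimizer_def d_def by simp
  ultimately have "d\<^sup>2 / e \<le> b \<bullet> (x - z)"
    unfolding objective_def by (simp add: inner_add_left inner_diff_right field_simps)
  also have "\<dots> \<le> M * d" unfolding d_def by (rule b)
  finally have "d * d \<le> (e * M) * d" using assms(1) by (simp add: power2_eq_square field_simps)
  moreover have "0 \<le> e * M" using assms(1,2) by simp
  ultimately show ?thesis unfolding d_def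
    by (metis mult_le_cancel_right not_le order.strict_trans1)
qed

end

locale lsc_regularizer = strongly_convex_regularizer +
  assumes closed: "closed X" and nonneg: "\<And>y. y \<in> X \<Longrightarrow> 0 \<le> reg y"
    and lsc: "\<And>ys z \<epsilon>. (\<And>n. ys n \<in> X) \<Longrightarrow> ys \<longlonglongrightarrow> z \<Longrightarrow> z \<in> X \<Longrightarrow> 0 < \<epsilon> \<Longrightarrow>
      \<forall>\<^sub>F n in sequentially. reg z - \<epsilon> < reg (ys n)"
begin

lemma objective_antimono:
  assumes "0 < e" "e \<le> e'" "y \<in> X"
  shows "objective c e' y \<le> objective c e y"
  using assms nonneg[OF assms(3)] unfolding objective_def by (simp add: frac_le)

lemma objective_bdd_below:
  assumes e: "0 < e"
  shows "bdd_below (objective c e ` X)"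
proof (cases "X = {}")
  case False
  then obtain p where p: "p \<in> X" by blast
  obtain k where k: "0 < k" "\<And>x. k * norm x \<le> nrm x" using is_norm_ge_norm[OF norm] by blast
  define L where "L = norm c / k"
  have "c \<bullet> p - e * L\<^sup>2 - reg p / e \<le> objective c e y" if y: "y \<in> X" for y
  proof -
    define d where "d = nrm (y - p)"
    have "0 \<le> reg ((1/2) *\<^sub>R y + (1 - 1/2) *\<^sub>R p)"
      using nonneg convexD[OF convex y p, of "1/2" "1 - 1/2"] by simp
    also have "\<dots> \<le> reg y / 2 + reg p / 2 - d\<^sup>2 / 8"
      using strongly_convex[OF y p, of "1/2"] unfolding d_def by simp
    finally have "(d\<^sup>2 / 4 - reg p) / e \<le> reg y / e"
      using e by (intro divide_right_mono) auto
    then have reg_y: "d\<^sup>2 / (4 * e) - reg p / e \<le> reg y / e" by (simp add: diff_divide_distrib)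
    have "c \<bullet> (p - y) \<le> norm c * norm (y - p)"
      by (metis norm_cauchy_schwarz norm_minus_commute)
    also have "\<dots> \<le> norm c * (d / k)"
      using k unfolding d_def by (intro mult_left_mono) (simp_all add: field_simps)
    finally have "c \<bullet> p - L * d \<le> c \<bullet> y" unfolding L_def by (simp add: inner_diff_right)
    moreover have "L * d \<le> d\<^sup>2 / (4 * e) + e * L\<^sup>2"
      using peter_paul_inequality[of "2 * e" L d] e by simp
    ultimately show ?thesis using reg_y unfolding objective_def by linarith
  qed
  then show ?thesis by (intro bdd_belowI2)
qed simp

lemma minimizing_sequence_Cauchy:
  assumes e: "0 < e" and ys: "\<And>n. ys n \<in> X" and lim: "(\<lambda>n. objective c e (ys n)) \<longlonglongrightarrow> m"
    and m: "\<And>y. y \<in> X \<Longrightarrow> m \<le> objective c e y"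
  shows "Cauchy ys"
proof (rule CauchyI)
  obtain k where k: "0 < k" "\<And>x. k * norm x \<le> nrm x" using is_norm_ge_norm[OF norm] by blast
  have gap: "(k * norm (ys a - ys b))\<^sup>2
      \<le> 4 * e * ((objective c e (ys a) - m) + (objective c e (ys b) - m))" for a b
  proof -
    have "(k * norm (ys a - ys b))\<^sup>2 \<le> (nrm (ys a - ys b))\<^sup>2"
      using k by (intro power_mono) auto
    moreover have "m \<le> objective c e ((1/2) *\<^sub>R ys a + (1/2) *\<^sub>R ys b)"
      using m convexD[OF convex ys ys] by simp
    then have "(nrm (ys a - ys b))\<^sup>2 / (8 * e)
        \<le> objective c e (ys a) / 2 + objective c e (ys b) / 2 - m"
      using objective_midpoint[OF ys[of a] ys[of b] e, of c] by linarith
    then have "(nrm (ys a - ys b))\<^sup>2 \<le> 4 * e * ((objective c e (ys a) - m) + (objective c e (ys b) - m))"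
      using e by (simp add: field_simps)
    ultimately show ?thesis by linarith
  qed
  fix \<epsilon> :: real assume "0 < \<epsilon>"
  then have "\<forall>\<^sub>F n in sequentially. objective c e (ys n) < m + (k * \<epsilon>)\<^sup>2 / (8 * e)"
    using k e by (intro order_tendstoD(2)[OF lim]) simp
  then obtain N where N: "\<And>n. N \<le> n \<Longrightarrow> objective c e (ys n) < m + (k * \<epsilon>)\<^sup>2 / (8 * e)"
    unfolding eventually_sequentially by blast
  have "norm (ys a - ys b) < \<epsilon>" if "N \<le> a" "N \<le> b" for a b
  proof -
    have "(k * norm (ys a - ys b))\<^sup>2 < (k * \<epsilon>)\<^sup>2"
      using gap[of a b] N[OF that(1)] N[OF that(2)] e by (simp add: field_simps)
    then show ?thesis
      using k \<open>0 < \<epsilon>\<close> by (simp add: power_mult_distrib power_less_imp_less_base)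
  qed
  then show "\<exists>N. \<forall>a\<ge>N. \<forall>b\<ge>N. norm (ys a - ys b) < \<epsilon>" by blast
qed

lemma objective_le_limit:
  assumes e: "0 < e" and ys: "\<And>n. ys n \<in> X" and z: "ys \<longlonglongrightarrow> z" "z \<in> X"
    and lim: "(\<lambda>n. objective c e (ys n)) \<longlonglongrightarrow> m"
  shows "objective c e z \<le> m"
proof (rule field_le_epsilon)
  fix \<epsilon> :: real assume "0 < \<epsilon>"
  then have "\<forall>\<^sub>F n in sequentially. reg z - \<epsilon> * e < reg (ys n)"
    using e by (intro lsc[OF ys z]) simp
  then have "\<forall>\<^sub>F n in sequentially. (reg z - \<epsilon> * e) / e < reg (ys n) / e"
    by (elim eventually_mono) (use e in \<open>simp add: divide_strict_right_mono\<close>)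
  then have "\<forall>\<^sub>F n in sequentially. c \<bullet> ys n + reg z / e - \<epsilon> \<le> objective c e (ys n)"
    unfolding objective_def by (elim eventually_mono) (use e in \<open>simp add: diff_divide_distrib\<close>)
  moreover have "(\<lambda>n. c \<bullet> ys n + reg z / e - \<epsilon>) \<longlonglongrightarrow> c \<bullet> z + reg z / e - \<epsilon>"
    using z(1) by (intro tendsto_intros)
  ultimately have "c \<bullet> z + reg z / e - \<epsilon> \<le> m"
    using lim by (intro tendsto_le[OF trivial_limit_sequentially])
  then show "objective c e z \<le> m + \<epsilon>" unfolding objective_def by simp
qed

lemma minimizer_exists:
  assumes e: "0 < e" and "X \<noteq> {}"
  obtains z where "minimizer c e z"
proof -
  define m where "m = Inf (objective c e ` X)"
  have bdd: "bdd_below (objective c e ` X)" by (rule objective_bdd_below[OF e])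
  then have m: "m \<le> objective c e y" if "y \<in> X" for y
    unfolding m_def using that by (simp add: cInf_lower)
  have "m \<in> closure (objective c e ` X)"
    unfolding m_def using bdd \<open>X \<noteq> {}\<close> by (intro closure_contains_Inf) auto
  then obtain u where u: "\<And>n. u n \<in> objective c e ` X" "u \<longlonglongrightarrow> m"
    unfolding closure_sequential by blast
  then have "\<forall>n. \<exists>y. y \<in> X \<and> u n = objective c e y" by blast
  then obtain ys where ys: "\<And>n. ys n \<in> X" "\<And>n. u n = objective c e (ys n)" by metis
  have "u = (\<lambda>n. objective c e (ys n))" by (rule ext) (rule ys(2))
  with u(2) have lim: "(\<lambda>n. objective c e (ys n)) \<longlonglongrightarrow> m" by simp
  have "Cauchy ys" using minimizing_sequence_Cauchy[OF e ys(1) lim m] .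
  then obtain z where z: "ys \<longlonglongrightarrow> z" using Cauchy_convergent_iff convergent_def by blast
  have "z \<in> X" using closed_sequentially[OF closed] ys(1) z by blast
  then have "minimizer c e z"
    using objective_le_limit[OF e ys(1) z _ lim] m unfolding minimizer_def by force
  then show thesis by (rule that)
qed

text \<open>One step of the delayed be-the-leader argument: the point \<open>x\<close> was chosen knowing only
  \<open>a\<close>, while the leader for \<open>a + b\<close> is at distance at most \<open>e * M\<close> from it.\<close>
lemma leader_step:
  assumes e: "0 < e" and "0 \<le> M" "0 \<le> G"
    and b: "\<And>v. b \<bullet> v \<le> M * nrm v" and gt: "\<And>v. gt \<bullet> v \<le> G * nrm v"
    and x: "minimizer a e x" and lower: "\<And>y. y \<in> X \<Longrightarrow> E \<le> objective (a + b) e y"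
    and y: "y \<in> X"
  shows "E + gt \<bullet> x - e * G * (G / 2 + M) \<le> objective (a + b + gt) e y"
proof -
  obtain z where z: "minimizer (a + b) e z"
    using minimizer_exists[OF e] x unfolding minimizer_def by blast
  define q where "q = nrm (y - z)"
  have "gt \<bullet> (x - z) \<le> G * (e * M)"
    using gt[of "x - z"] minimizer_stability[OF e \<open>0 \<le> M\<close> b x z] \<open>0 \<le> G\<close>
    by (meson mult_left_mono order_trans)
  moreover have "gt \<bullet> (z - y) \<le> q\<^sup>2 / (2 * e) + e * G\<^sup>2 / 2"
    using gt[of "z - y"] peter_paul_inequality[OF e, of G q]
    unfolding q_def by (simp add: is_norm_minus_commute[OF norm])
  moreover have "E + q\<^sup>2 / (2 * e) \<le> objective (a + b) e y"
    using lower[of z] minimizer_quadratic_growth[OF e z y] z unfolding minimizer_def q_def by simp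
  moreover have "objective (a + b + gt) e y = objective (a + b) e y + gt \<bullet> y"
    unfolding objective_def by (simp add: inner_add_left)
  moreover have "gt \<bullet> y = gt \<bullet> x - gt \<bullet> (x - z) - gt \<bullet> (z - y)"
    by (simp add: inner_diff_right)
  moreover have "e * G * (G / 2 + M) = G * (e * M) + e * G\<^sup>2 / 2"
    by (simp add: power2_eq_square algebra_simps)
  ultimately show ?thesis by linarith
qed

end

section \<open>Delayed feedback\<close>

lemma card_diff_le_delay:
  fixes A Q :: "nat set"
  assumes "A \<subseteq> {1..<t}" "1 \<le> t" "t \<le> card A + \<tau> + 1" "Q \<subseteq> {1..card A + \<tau> + 1}" "t \<notin> Q"
  shows "card (Q - A) \<le> \<tau>"
proof -
  have "finite A" using assms(1) finite_subset by blast
  have "card (Q - A) \<le> card ({1..card A + \<tau> + 1} - insert t A)"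
    using assms by (intro card_mono) auto
  also have "\<dots> = card {1..card A + \<tau> + 1} - card (insert t A)"
    using assms \<open>finite A\<close> by (intro card_Diff_subset) auto
  also have "card (insert t A) = card A + 1"
    using assms(1) \<open>finite A\<close> by (subst card_insert_disjoint) auto
  finally show ?thesis by simp
qed

locale delayed_feedback =
  fixes S :: "nat \<Rightarrow> nat set" and T \<tau> :: nat
  assumes S_sub: "\<And>t. S t \<subseteq> {1..<t}"
    and delay: "\<And>t. t \<in> {1..T} \<Longrightarrow> t \<le> card (S t) + \<tau> + 1"
    and S_card: "\<And>t s. t \<in> {1..T} \<Longrightarrow> s \<in> S t \<Longrightarrow> card (S s) < card (S t)"
begin

lemma card_S_le: "t \<in> {1..T} \<Longrightarrow> card (S t) \<le> T - 1"
  using card_mono[OF _ S_sub[of t]] by simp linarith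

text \<open>Rounds are processed in increasing order of \<open>card (S t)\<close>; the processed rounds then
  always form a \<open>rank_closed\<close> set.\<close>
definition rank_closed :: "nat set \<Rightarrow> bool" where
  "rank_closed Q \<longleftrightarrow> (\<forall>t\<in>Q. \<forall>u\<in>{1..T}. card (S u) < card (S t) \<longrightarrow> u \<in> Q)"

lemma rank_closed_insert:
  assumes sub: "insert t Q \<subseteq> {1..T}" and closed: "rank_closed (insert t Q)" and "t \<notin> Q"
    and rank: "\<And>u. u \<in> Q \<Longrightarrow> card (S u) \<le> card (S t)"
  shows "rank_closed Q" "S t \<subseteq> Q" "card (Q - S t) \<le> \<tau>"
proof -
  show "rank_closed Q"
    unfolding rank_closed_def
  proof (intro ballI impI)
    fix v u assume v: "v \<in> Q" and u: "u \<in> {1..T}" and lt: "card (S u) < card (S v)"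
    then have "u \<noteq> t" using rank[OF v] by auto
    moreover have "u \<in> insert t Q" using closed v u lt unfolding rank_closed_def by blast
    ultimately show "u \<in> Q" by simp
  qed
  show "S t \<subseteq> Q"
  proof
    fix s assume s: "s \<in> S t"
    have t: "t \<in> {1..T}" using sub by simp
    then have "s \<in> {1..T}" "s \<noteq> t" using s S_sub[of t] by auto
    then show "s \<in> Q" using closed S_card[OF t s] unfolding rank_closed_def by blast
  qed
  have "u \<le> card (S t) + \<tau> + 1" if "u \<in> Q" for u
    using delay[of u] rank[OF that] sub that by auto
  then have "Q \<subseteq> {1..card (S t) + \<tau> + 1}" using sub by auto
  then show "card (Q - S t) \<le> \<tau>"
    using card_diff_le_delay[OF S_sub _ _ _ \<open>t \<notin> Q\<close>] delay[of t] sub by auto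
qed

end

lemma delayed_feedbackI:
  fixes S :: "nat \<Rightarrow> nat set"
  assumes S_sub: "\<And>t. S t \<subseteq> {1..<t}" and delay: "\<And>t. t \<in> {1..T} \<Longrightarrow> {1..t - \<tau> - 1} \<subseteq> S t"
    and "\<And>t s. t \<in> {1..T} \<Longrightarrow> s \<in> S t \<Longrightarrow> card (S s) < card (S t)"
  shows "delayed_feedback S T \<tau>"
proof
  show "t \<le> card (S t) + \<tau> + 1" if "t \<in> {1..T}" for t
    using card_mono[OF finite_subset[OF S_sub finite_atLeastLessThan] delay[OF that]] by simp
qed (use assms in auto)

context lsc_regularizer
begin

lemma delayed_leader_bound:
  fixes S :: "nat \<Rightarrow> nat set" and g x :: "nat \<Rightarrow> 'a" and \<eta> :: "nat \<Rightarrow> real"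
  assumes "delayed_feedback S T \<tau>"
    and \<eta>_pos: "\<And>t. 0 < \<eta> t" and \<eta>_antimono: "\<And>t u. card (S u) \<le> card (S t) \<Longrightarrow> \<eta> t \<le> \<eta> u"
    and "0 \<le> G" and g: "\<And>t v. t \<in> {1..T} \<Longrightarrow> g t \<bullet> v \<le> G * nrm v"
    and x: "\<And>t. t \<in> {1..T} \<Longrightarrow> minimizer (\<Sum>s\<in>S t. g s) (\<eta> t) (x t)"
    and Q: "finite Q" "Q \<subseteq> {1..T}" "delayed_feedback.rank_closed S T Q"
    and e: "0 < e" "\<And>t. t \<in> Q \<Longrightarrow> e \<le> \<eta> t" and y: "y \<in> X"
  shows "(\<Sum>t\<in>Q. g t \<bullet> x t - \<eta> t * G * (G / 2 + \<tau> * G)) \<le> objective (\<Sum>t\<in>Q. g t) e y"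
  using Q e y
proof (induction Q arbitrary: e y rule: finite_ranking_induct[where f = "\<lambda>t. card (S t)"])
  case empty
  then show ?case unfolding objective_def using nonneg by simp
next
  case (insert t Q)
  interpret delayed_feedback S T \<tau> by fact
  show ?case
  proof (cases "t \<in> Q")
    case True
    then show ?thesis using insert.IH insert.prems by (simp add: insert_absorb)
  next
    case False
    have t: "t \<in> {1..T}" using insert.prems(1) by simp
    obtain Q_closed: "rank_closed Q" and St: "S t \<subseteq> Q" and card_late: "card (Q - S t) \<le> \<tau>"
      using rank_closed_insert[OF insert.prems(1,2) False insert.hyps(2)] by blast
    have IH: "\<And>y. y \<in> X \<Longrightarrow> (\<Sum>u\<in>Q. g u \<bullet> x u - \<eta> u * G * (G / 2 + \<tau> * G))
        \<le> objective (\<Sum>s\<in>Q. g s) (\<eta> t) y"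
      using insert.IH[OF _ Q_closed \<eta>_pos] insert.prems(1) insert.hyps(2) \<eta>_antimono by blast
    have late: "(\<Sum>s\<in>Q - S t. g s) \<bullet> v \<le> \<tau> * G * nrm v" for v
    proof -
      have "(\<Sum>s\<in>Q - S t. g s) \<bullet> v \<le> card (Q - S t) * (G * nrm v)"
        using g insert.prems(1) by (intro inner_sum_le_card_mult) auto
      also have "\<dots> \<le> \<tau> * (G * nrm v)"
        using card_late \<open>0 \<le> G\<close> is_norm_nonneg[OF norm] by (simp add: mult_right_mono)
      finally show ?thesis by simp
    qed
    have split_Q: "(\<Sum>s\<in>Q. g s) = (\<Sum>s\<in>S t. g s) + (\<Sum>s\<in>Q - S t. g s)"
      using St insert.hyps(1) by (simp add: sum.subset_diff)
    have "(\<Sum>u\<in>Q. g u \<bullet> x u - \<eta> u * G * (G / 2 + \<tau> * G)) + g t \<bullet> x t - \<eta> t * G * (G / 2 + \<tau> * G)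
        \<le> objective ((\<Sum>s\<in>Q. g s) + g t) (\<eta> t) y"
      using \<open>0 \<le> G\<close> late g[OF t] x[OF t] IH insert.prems(5)
      unfolding split_Q by (intro leader_step[OF \<eta>_pos]) auto
    also have "\<dots> \<le> objective ((\<Sum>s\<in>Q. g s) + g t) e y"
      using insert.prems(3-5) by (intro objective_antimono) auto
    finally show ?thesis using False insert.hyps(1) by (simp add: algebra_simps)
  qed
qed

end

section \<open>Extended-real data and step sizes\<close>

lemma subgradient_linearization:
  assumes "g \<in> subdiff f x" "subdiff f p \<noteq> {}"
  shows "real_of_ereal (f x) - real_of_ereal (f p) \<le> g \<bullet> x - g \<bullet> p"
proof -
  have "\<bar>f x\<bar> \<noteq> \<infinity>" "\<bar>f p\<bar> \<noteq> \<infinity>" and le: "f x + ereal (g \<bullet> (p - x)) \<le> f p"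
    using assms unfolding subdiff_def by auto
  then obtain a b where "f x = ereal a" "f p = ereal b" by auto
  then show ?thesis using le by (simp add: inner_diff_right)
qed

lemma lower_semicont_sequentially:
  assumes "lower_semicont h" "ys \<longlonglongrightarrow> z" "c < h z"
  shows "\<forall>\<^sub>F n in sequentially. c < h (ys n)"
proof -
  have "h z \<le> Liminf (at z) h" using assms(1) unfolding lower_semicont_def by blast
  then have "\<forall>\<^sub>F y in at z. c < h y" using assms(3) le_Liminf_iff by blast
  then have "\<forall>\<^sub>F y in nhds z. c < h y"
    using assms(3) unfolding eventually_at_filter by (auto elim: eventually_mono)
  then show ?thesis using assms(2) by (rule eventually_compose_filterlim)
qed

lemma lsc_regularizer_real_of_ereal:
  fixes h :: "'a::euclidean_space \<Rightarrow> ereal"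
  assumes "is_norm nrm" "closed X" "convex X" "lower_semicont h" "strongly_convex_on X nrm h"
    and finite: "\<And>y. y \<in> X \<Longrightarrow> h y < \<infinity>" and nonneg: "\<And>y. 0 \<le> h y"
  shows "lsc_regularizer nrm X (\<lambda>y. real_of_ereal (h y))"
proof -
  define reg where "reg y = real_of_ereal (h y)" for y
  have h: "h y = ereal (reg y)" if "y \<in> X" for y
    unfolding reg_def using finite[OF that] nonneg[of y] by (cases "h y") auto
  have "lsc_regularizer nrm X reg"
  proof (unfold_locales)
    fix x y and u :: real assume x: "x \<in> X" and y: "y \<in> X" and u: "0 \<le> u" "u \<le> 1"
    have "u *\<^sub>R x + (1 - u) *\<^sub>R y \<in> X" using convexD[OF assms(3) x y, of u "1 - u"] u by simp
    then show "reg (u *\<^sub>R x + (1 - u) *\<^sub>R y)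
        \<le> u * reg x + (1 - u) * reg y - u * (1 - u) / 2 * (nrm (x - y))\<^sup>2"
      using assms(5)[unfolded strongly_convex_on_def, rule_format, OF x y, of u] u
      by (simp add: h x y)
  next
    fix ys z and \<epsilon> :: real assume ys: "\<And>n. ys n \<in> X" "ys \<longlonglongrightarrow> z" and z: "z \<in> X" and "0 < \<epsilon>"
    then have "ereal (reg z - \<epsilon>) < h z" by (simp add: h)
    from lower_semicont_sequentially[OF assms(4) ys(2) this]
    show "\<forall>\<^sub>F n in sequentially. reg z - \<epsilon> < reg (ys n)"
      by (elim eventually_mono) (simp add: h ys(1))
  qed (use assms nonneg in \<open>auto simp: reg_def real_of_ereal_pos\<close>)
  then show ?thesis unfolding reg_def .
qed

definition delayed_step_size :: "real \<Rightarrow> real \<Rightarrow> nat \<Rightarrow> nat \<Rightarrow> real" where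
  "delayed_step_size r G \<tau> n = r / (G * sqrt ((1 + 2 * real \<tau>) * (real n + real \<tau> + 1)))"

lemma delayed_step_size_pos: "0 < r \<Longrightarrow> 0 < G \<Longrightarrow> 0 < delayed_step_size r G \<tau> n"
  unfolding delayed_step_size_def by (simp add: add_pos_nonneg)

lemma delayed_step_size_antimono:
  assumes "0 < r" "0 < G" "n \<le> n'"
  shows "delayed_step_size r G \<tau> n' \<le> delayed_step_size r G \<tau> n"
  unfolding delayed_step_size_def using assms
  by (intro divide_left_mono mult_left_mono real_sqrt_le_mono mult_pos_pos) (auto simp: add_pos_nonneg)

lemma delayed_step_size_cost_le:
  assumes r: "0 < r" and G: "0 < G" and t: "1 \<le> t" "t \<le> n + \<tau> + 1"
  shows "delayed_step_size r G \<tau> n * G * (G / 2 + \<tau> * G)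
    \<le> r * G * sqrt (1 + 2 * real \<tau>) / (2 * sqrt (real t))"
proof -
  define s where "s = sqrt (1 + 2 * real \<tau>)"
  define w where "w = sqrt (real n + real \<tau> + 1)"
  have "0 < s" "0 < w" unfolding s_def w_def by (simp_all add: add_pos_nonneg)
  have "sqrt ((1 + 2 * real \<tau>) * (real n + real \<tau> + 1)) = s * w"
    unfolding s_def w_def by (simp add: real_sqrt_mult)
  moreover have "G / 2 + \<tau> * G = G * (s * s) / 2" unfolding s_def by (simp add: algebra_simps)
  ultimately have "delayed_step_size r G \<tau> n * G * (G / 2 + \<tau> * G)
      = r / (G * (s * w)) * G * (G * (s * s) / 2)"
    unfolding delayed_step_size_def by simp
  also have "\<dots> = r * G * s / (2 * w)" using G \<open>0 < s\<close> \<open>0 < w\<close> by (simp add: field_simps)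
  also have "\<dots> \<le> r * G * s / (2 * sqrt (real t))"
    using \<open>0 < s\<close> r G t unfolding w_def by (intro divide_left_mono) auto
  finally show ?thesis unfolding s_def .
qed

lemma sum_inverse_sqrt_le: "(\<Sum>t=1..T. 1 / (2 * sqrt (real t))) \<le> sqrt (real T)"
proof (induction T)
  case (Suc T)
  define a b where "a = sqrt (real (Suc T))" and "b = sqrt (real T)"
  have "0 < a" "a\<^sup>2 = b\<^sup>2 + 1" unfolding a_def b_def by simp_all
  moreover have "2 * a * b \<le> a\<^sup>2 + b\<^sup>2" using sum_squares_bound[of a b] by simp
  ultimately have "b + 1 / (2 * a) \<le> a" by (simp add: field_simps power2_eq_square)
  then show ?case using Suc unfolding a_def b_def by simp
qed simp

lemma delayed_step_size_regret_bound:
  fixes n :: "nat \<Rightarrow> nat"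
  assumes r: "0 < r" and G: "0 < G" and "1 \<le> T" and hp: "hp \<le> r\<^sup>2"
    and delay: "\<And>t. t \<in> {1..T} \<Longrightarrow> t \<le> n t + \<tau> + 1"
  shows "hp / delayed_step_size r G \<tau> (T - 1)
      + (\<Sum>t=1..T. delayed_step_size r G \<tau> (n t) * G * (G / 2 + \<tau> * G))
    \<le> 2 * r * G * sqrt ((real T + real \<tau>) * (1 + 2 * real \<tau>))"
proof -
  define s where "s = sqrt (1 + 2 * real \<tau>)"
  define B where "B = r * G * s * sqrt (real T + real \<tau>)"
  have "real (T - 1) + real \<tau> + 1 = real T + real \<tau>" using \<open>1 \<le> T\<close> by simp
  then have "sqrt ((1 + 2 * real \<tau>) * (real (T - 1) + real \<tau> + 1)) = s * sqrt (real T + real \<tau>)"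
    unfolding s_def by (simp add: real_sqrt_mult)
  then have "hp / delayed_step_size r G \<tau> (T - 1) = hp * (G * s * sqrt (real T + real \<tau>)) / r"
    unfolding delayed_step_size_def by (simp add: mult.assoc)
  also have "\<dots> \<le> r\<^sup>2 * (G * s * sqrt (real T + real \<tau>)) / r"
    using hp r G unfolding s_def by (intro divide_right_mono mult_right_mono) auto
  also have "\<dots> = B" unfolding B_def using r by (simp add: power2_eq_square)
  finally have reg_term: "hp / delayed_step_size r G \<tau> (T - 1) \<le> B" .
  have "(\<Sum>t=1..T. delayed_step_size r G \<tau> (n t) * G * (G / 2 + \<tau> * G))
      \<le> (\<Sum>t=1..T. r * G * s * (1 / (2 * sqrt (real t))))"
    using delayed_step_size_cost_le[OF r G] delay unfolding s_def by (intro sum_mono) simp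
  also have "\<dots> = r * G * s * (\<Sum>t=1..T. 1 / (2 * sqrt (real t)))" by (simp add: sum_distrib_left)
  also have "\<dots> \<le> r * G * s * sqrt (real T + real \<tau>)"
  proof (intro mult_left_mono)
    show "(\<Sum>t=1..T. 1 / (2 * sqrt (real t))) \<le> sqrt (real T + real \<tau>)"
      using sum_inverse_sqrt_le[of T] real_sqrt_le_mono[of "real T" "real T + real \<tau>"] by linarith
  qed (use r G in \<open>simp add: s_def\<close>)
  finally have "(\<Sum>t=1..T. delayed_step_size r G \<tau> (n t) * G * (G / 2 + \<tau> * G)) \<le> B"
    unfolding B_def .
  moreover have "2 * r * G * sqrt ((real T + real \<tau>) * (1 + 2 * real \<tau>)) = 2 * B"
    unfolding B_def s_def by (simp add: real_sqrt_mult)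
  ultimately show ?thesis using reg_term by linarith
qed

theorem proposition4:
  fixes nrm :: "'a::euclidean_space \<Rightarrow> real"
    and X :: "'a set"
    and h :: "'a \<Rightarrow> ereal"
    and f :: "nat \<Rightarrow> 'a \<Rightarrow> ereal"
    and g x :: "nat \<Rightarrow> 'a"
    and agent :: "nat \<Rightarrow> 'i"
    and SA :: "'i \<Rightarrow> nat \<Rightarrow> nat set"
    and \<eta> :: "nat \<Rightarrow> real"
    and T \<tau> :: nat and G r :: real and p :: 'a
  defines "S \<equiv> (\<lambda>t. SA (agent t) t)"
  defines "\<eta> \<equiv> (\<lambda>t. r / (G * sqrt ((1 + 2 * real \<tau>) * (real (card (S t)) + real \<tau> + 1))))"
  assumes norm: "is_norm nrm"
    and X_closed: "closed X" and X_convex: "convex X"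
    and h_lsc: "lower_semicont h"
    and h_sc: "strongly_convex_on X nrm h"
    and X_dom: "\<forall>y\<in>X. h y < \<infinity>"
    and h_sel: "\<exists>\<sigma>. continuous_on (dom_subdiff h) \<sigma> \<and> (\<forall>y\<in>dom_subdiff h. \<sigma> y \<in> subdiff h y)"
    and h_nonneg: "\<forall>y. h y \<ge> 0"
    and f_convex: "\<forall>t\<in>{1..T}. ereal_convex (f t)"
    and f_dom: "\<forall>t\<in>{1..T}. X \<subseteq> dom_subdiff (f t)"
    and S_sub: "\<forall>i t. SA i t \<subseteq> {1..<t}"
    and S_mono: "\<forall>i t t'. t \<le> t' \<longrightarrow> SA i t \<subseteq> SA i t'"
    and delay: "\<forall>t\<in>{1..T}. {1..t - \<tau> - 1} \<subseteq> S t"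
    and S_card: "\<forall>t\<in>{1..T}. \<forall>s\<in>S t. card (S s) < card (S t)"
    and G_pos: "G > 0" and r_pos: "r > 0"
    and g_bound: "\<forall>t\<in>{1..T}. dual_norm nrm (g t) \<le> G"
    and x_in: "\<forall>t\<in>{1..T}. x t \<in> X"
    and g_sub: "\<forall>t\<in>{1..T}. g t \<in> subdiff (f t) (x t)"
    and DDA: "\<forall>t\<in>{1..T}. \<forall>y\<in>X.
        (\<Sum>s\<in>S t. g s \<bullet> x t) + real_of_ereal (h (x t)) / \<eta> t
          \<le> (\<Sum>s\<in>S t. g s \<bullet> y) + real_of_ereal (h y) / \<eta> t"
    and p_in: "p \<in> X" and p_h: "h p \<le> ereal (r\<^sup>2)"
  shows "(\<Sum>t=1..T. real_of_ereal (f t (x t)) - real_of_ereal (f t p))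
           \<le> 2 * r * G * sqrt ((real T + real \<tau>) * (1 + 2 * real \<tau>))"
proof -
  interpret lsc_regularizer nrm X "\<lambda>y. real_of_ereal (h y)"
    using lsc_regularizer_real_of_ereal[OF norm X_closed X_convex h_lsc h_sc] X_dom h_nonneg by blast
  have feedback: "delayed_feedback S T \<tau>"
    using S_sub delay S_card unfolding S_def by (intro delayed_feedbackI) auto
  have \<eta>_eq: "\<eta> t = delayed_step_size r G \<tau> (card (S t))" for t
    unfolding \<eta>_def delayed_step_size_def ..
  show ?thesis
  proof (cases "T = 0")
    case False
    let ?e = "delayed_step_size r G \<tau> (T - 1)"
    have "(\<Sum>t\<in>{1..T}. g t \<bullet> x t - \<eta> t * G * (G / 2 + \<tau> * G)) \<le> objective (\<Sum>t\<in>{1..T}. g t) ?e p"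
    proof (rule delayed_leader_bound[OF feedback])
      show "?e \<le> \<eta> t" if "t \<in> {1..T}" for t
        unfolding \<eta>_eq using delayed_feedback.card_S_le[OF feedback that] G_pos r_pos
        by (intro delayed_step_size_antimono)
      show "minimizer (\<Sum>s\<in>S t. g s) (\<eta> t) (x t)" if "t \<in> {1..T}" for t
        using DDA x_in that unfolding minimizer_def objective_def by (simp add: inner_sum_left)
    qed (use G_pos r_pos p_in g_bound in \<open>auto simp: \<eta>_eq delayed_step_size_pos delayed_step_size_antimono
          inner_le_of_dual_norm_le[OF norm]
          delayed_feedback.rank_closed_def[OF feedback]\<close>)
    moreover have "(\<Sum>t=1..T. real_of_ereal (f t (x t)) - real_of_ereal (f t p))
        \<le> (\<Sum>t=1..T. g t \<bullet> x t - g t \<bullet> p)"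
      using g_sub f_dom p_in by (intro sum_mono subgradient_linearization) (force simp: dom_subdiff_def)+
    moreover have "real_of_ereal (h p) / ?e + (\<Sum>t=1..T. \<eta> t * G * (G / 2 + \<tau> * G))
        \<le> 2 * r * G * sqrt ((real T + real \<tau>) * (1 + 2 * real \<tau>))"
      unfolding \<eta>_eq using False G_pos r_pos delayed_feedback.delay[OF feedback]
        real_of_ereal_positive_mono[OF h_nonneg[rule_format] p_h]
      by (intro delayed_step_size_regret_bound) auto
    ultimately show ?thesis
      unfolding objective_def by (simp add: sum_subtractf inner_sum_left)
  qed (use G_pos r_pos in simp)
qed

end
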